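(* For every type vector $\kappa$ there exists an infinite selection path $\gamma(\infty)$ along which the formation process converges (i.e., reaches a stable network) both under complete information and under incomplete information.
   Context: Model. There are $N\ge 2$ agents $I=\{1,\dots,N\}$. Each agent $i$ has a private type $k_i\in X$; types are drawn i.i.d. from a prior distribution $H$ on $X$, and $\kappa=(k_1,\dots,k_N)$ is the type vector. There is a function $f:X\to\mathbb{R}_{>0}$, a link cost $c>0$ and a decay factor $\delta\in(0,1)$; $\mathbb{E}[f(x)]=\int_X f\,dH$ is assumed well defined. A network ${\bf g}$ is a set of unordered pairs $ij$ ($i\neq j$), called links. Agents $i,j$ are connected in ${\bf g}$ if there is a path of links between them; $d_{ij}$ is the length of a shortest such path ($\infty$ if not connected); $C_i$ denotes the component of ${\bf g}$ containing $i$. Agent $i$'s payoff is $u_i({\bf g})=\sum_{j\neq i,\ j\text{ connected to }i}\delta^{d_{ij}-1}f(k_j)-c\cdot\#\{j: ij\in{\bf g}\}$. Dynamics. The network is empty at $t=0$. In each period $t\ge1$ one unordered pair $(i,j)$ is selected; the sequence of selected pairs is the selection path. The selected agents observe each other's components and simultaneously choose $a_{ij},a_{ji}\in\{0,1\}$ (1 = agree to form the link if absent / keep it if present, 0 = refuse / sever); after the period the link $ij$ is present iff $a_{ij}=a_{ji}=1$. Agents are myopic and play the stable optimistic equilibrium (SOE): agent $i$ chooses $1$ iff his expected current payoff (w.r.t. his belief) from the network resulting with the link $ij$ is at least his current payoff without it. Information. Under complete information every agent knows $\kappa$. Under incomplete information (simple updating rule), if $i$ and $j$ have ever been connected at some period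 so far, each knows the other's type; otherwise each one's belief about the other's type is the prior $H$. Convergence. Given a selection path $\gamma(t)$, the resulting network ${\bf g}(\gamma(t))$ and beliefs $B(\gamma(t))$ are uniquely determined. A pair $({\bf g},B)$ is stable if no link is formed or severed along any subsequent selection path. The process converges along $\gamma(\infty)$ to ${\bf g}$ if for some $t$, ${\bf g}={\bf g}(\gamma(t))$ and $({\bf g}(\gamma(t)),B(\gamma(t)))$ is stable. *)

theory Defs
  imports "HOL-Probability.Probability"
begin

text \<open>A state of the process is a pair (g, K): the network g and the relation K of pairs
  (i,j) of agents that have been connected at some period so far (so that i knows the type of j).\<close>

definition agents :: "nat \<Rightarrow> nat set" where
  "agents N = {1..N}"

text \<open>Admissible selected pairs (a selected unordered pair, written as an ordered pair).\<close>
definition sel_pairs :: "nat \<Rightarrow> (nat \<times> nat) set" where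
  "sel_pairs N = {(i, j). i \<in> agents N \<and> j \<in> agents N \<and> i \<noteq> j}"

inductive walk :: "nat set set \<Rightarrow> nat \<Rightarrow> nat \<Rightarrow> nat \<Rightarrow> bool" where
  walk_nil: "walk g i i 0"
| walk_cons: "{i, k} \<in> g \<Longrightarrow> walk g k j n \<Longrightarrow> walk g i j (Suc n)"

definition connected :: "nat set set \<Rightarrow> nat \<Rightarrow> nat \<Rightarrow> bool" where
  "connected g i j \<longleftrightarrow> (\<exists>n. walk g i j n)"

text \<open>Shortest path length d_ij (only used when i and j are connected).\<close>
definition dist :: "nat set set \<Rightarrow> nat \<Rightarrow> nat \<Rightarrow> nat" where
  "dist g i j = (LEAST n. walk g i j n)"

text \<open>Payoff of agent i in network g, when i values agent j at v j
  (v j = f(k_j) if the type is known, the expectation E[f] otherwise; payoffs are linear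
  in these values, so expected payoff w.r.t. the belief is obtained this way).\<close>
definition payoff :: "nat \<Rightarrow> real \<Rightarrow> real \<Rightarrow> (nat \<Rightarrow> real) \<Rightarrow> nat set set \<Rightarrow> nat \<Rightarrow> real" where
  "payoff N c \<delta> v g i =
     (\<Sum>j\<in>{j \<in> agents N. j \<noteq> i \<and> connected g i j}. \<delta> ^ (dist g i j - 1) * v j)
     - c * real (card {j \<in> agents N. {i, j} \<in> g})"

definition valuation :: "('x \<Rightarrow> real) \<Rightarrow> (nat \<Rightarrow> 'x) \<Rightarrow> real \<Rightarrow> bool \<Rightarrow> (nat \<times> nat) set \<Rightarrow> nat \<Rightarrow> nat \<Rightarrow> real" where
  "valuation f \<kappa> Ef cmpl K i j = (if cmpl \<or> (i, j) \<in> K then f (\<kappa> j) else Ef)"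

definition agrees :: "nat \<Rightarrow> real \<Rightarrow> real \<Rightarrow> ('x \<Rightarrow> real) \<Rightarrow> (nat \<Rightarrow> 'x) \<Rightarrow> real \<Rightarrow> bool
     \<Rightarrow> nat set set \<times> (nat \<times> nat) set \<Rightarrow> nat \<Rightarrow> nat \<Rightarrow> bool" where
  "agrees N c \<delta> f \<kappa> Ef cmpl st i j \<longleftrightarrow>
     payoff N c \<delta> (valuation f \<kappa> Ef cmpl (snd st) i) (insert {i, j} (fst st)) i
     \<ge> payoff N c \<delta> (valuation f \<kappa> Ef cmpl (snd st) i) (fst st - {{i, j}}) i"

definition step :: "nat \<Rightarrow> real \<Rightarrow> real \<Rightarrow> ('x \<Rightarrow> real) \<Rightarrow> (nat \<Rightarrow> 'x) \<Rightarrow> real \<Rightarrow> bool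
     \<Rightarrow> nat set set \<times> (nat \<times> nat) set \<Rightarrow> nat \<times> nat \<Rightarrow> nat set set \<times> (nat \<times> nat) set" where
  "step N c \<delta> f \<kappa> Ef cmpl st p =
     (let i = fst p; j = snd p;
          g' = (if agrees N c \<delta> f \<kappa> Ef cmpl st i j \<and> agrees N c \<delta> f \<kappa> Ef cmpl st j i
                then insert {i, j} (fst st) else fst st - {{i, j}})
      in (g', snd st \<union> {(a, b). connected g' a b}))"

text \<open>State after t periods along selection path \<gamma>; \<gamma> t is the pair selected in period t+1.
  Start: empty network, no agent has been connected to another.\<close>
primrec run :: "nat \<Rightarrow> real \<Rightarrow> real \<Rightarrow> ('x \<Rightarrow> real) \<Rightarrow> (nat \<Rightarrow> 'x) \<Rightarrow> real \<Rightarrow> bool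
     \<Rightarrow> (nat \<Rightarrow> nat \<times> nat) \<Rightarrow> nat \<Rightarrow> nat set set \<times> (nat \<times> nat) set" where
  "run N c \<delta> f \<kappa> Ef cmpl \<gamma> 0 = ({}, {})"
| "run N c \<delta> f \<kappa> Ef cmpl \<gamma> (Suc t) = step N c \<delta> f \<kappa> Ef cmpl (run N c \<delta> f \<kappa> Ef cmpl \<gamma> t) (\<gamma> t)"

text \<open>Stability: no link is formed or severed along any subsequent (finite segment of a)
  selection path.\<close>
definition stable :: "nat \<Rightarrow> real \<Rightarrow> real \<Rightarrow> ('x \<Rightarrow> real) \<Rightarrow> (nat \<Rightarrow> 'x) \<Rightarrow> real \<Rightarrow> bool
     \<Rightarrow> nat set set \<times> (nat \<times> nat) set \<Rightarrow> bool" where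
  "stable N c \<delta> f \<kappa> Ef cmpl st \<longleftrightarrow>
     (\<forall>ps. set ps \<subseteq> sel_pairs N \<longrightarrow> fst (foldl (step N c \<delta> f \<kappa> Ef cmpl) st ps) = fst st)"

definition converges :: "nat \<Rightarrow> real \<Rightarrow> real \<Rightarrow> ('x \<Rightarrow> real) \<Rightarrow> (nat \<Rightarrow> 'x) \<Rightarrow> real \<Rightarrow> bool
     \<Rightarrow> (nat \<Rightarrow> nat \<times> nat) \<Rightarrow> bool" where
  "converges N c \<delta> f \<kappa> Ef cmpl \<gamma> \<longleftrightarrow> (\<exists>t. stable N c \<delta> f \<kappa> Ef cmpl (run N c \<delta> f \<kappa> Ef cmpl \<gamma> t))"

end

(*
  Let h0 be an agent of maximal value f(k_h0), let A be the agents worth a direct link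
  (f(k_j) >= c) and Hi the agents worth a direct link even when already at distance two
  ((1 - delta) f(k_j) >= c).  The "hub network" consists of the star with centre h0 and
  leaves A - {h0} together with the clique on Hi.  Every agent in it is within distance
  two of everybody in his component, so all payoff differences caused by one link can be
  computed exactly; this shows that, once every agent knows every type, no selected pair
  ever changes the hub network: it is stable.

  The selection path lets h0 meet every other agent twice and then lets every pair of Hi
  meet.  Under complete information the first round already yields the star on A and the
  clique on Hi is then added.  Under incomplete information with E[f] >= c the first round
  builds the full star (unknown agents are valued at E[f]), after which everybody knows
  every type, and the second round and the meetings within Hi again yield the hub
  network.  If E[f] < c, nobody ever agrees to link, so the empty network is stable from
  the start.
*)
theory Submission
  imports Defs
begin

section \<open>Walks and distances\<close>

lemma walk_0_iff: "walk g i j 0 \<longleftrightarrow> i = j"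
  by (auto elim: walk.cases intro: walk.intros)

lemma walk_1_iff: "walk g i j (Suc 0) \<longleftrightarrow> {i, j} \<in> g"
proof
  assume "walk g i j (Suc 0)"
  then show "{i, j} \<in> g" by (cases rule: walk.cases) (auto simp: walk_0_iff)
next
  assume "{i, j} \<in> g"
  then show "walk g i j (Suc 0)" by (auto intro: walk.intros)
qed

lemma walk_2: "{i, k} \<in> g \<Longrightarrow> {k, j} \<in> g \<Longrightarrow> walk g i j 2"
  by (metis numeral_2_eq_2 walk_1_iff walk_cons)

definition link_closed :: "nat set set \<Rightarrow> nat set \<Rightarrow> bool" where
  "link_closed g S \<longleftrightarrow> (\<forall>x y. {x, y} \<in> g \<longrightarrow> x \<in> S \<longrightarrow> y \<in> S)"

lemma walk_closed: "walk g a b n \<Longrightarrow> link_closed g S \<Longrightarrow> a \<in> S \<Longrightarrow> b \<in> S"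
  by (induction rule: walk.induct) (auto simp: link_closed_def)

lemma link_closed_insert: "link_closed g S \<Longrightarrow> x \<in> S \<Longrightarrow> y \<in> S \<Longrightarrow> link_closed (insert {x, y} g) S"
  unfolding link_closed_def by (auto simp: doubleton_eq_iff)

lemma walk_mono: "walk g a b n \<Longrightarrow> g \<subseteq> g' \<Longrightarrow> walk g' a b n"
  by (induction rule: walk.induct) (auto intro: walk.intros)

lemma walk_length_ge2: "walk g i j n \<Longrightarrow> i \<noteq> j \<Longrightarrow> {i, j} \<notin> g \<Longrightarrow> 2 \<le> n"
  using walk_0_iff walk_1_iff by (cases n; cases "n - 1") auto

lemma connected_link: "{i, j} \<in> g \<Longrightarrow> connected g i j"
  unfolding connected_def using walk_1_iff by blast

lemma connected_two: "{i, k} \<in> g \<Longrightarrow> {k, j} \<in> g \<Longrightarrow> connected g i j"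
  unfolding connected_def using walk_2 by blast

lemma not_connected_isolated:
  assumes "\<forall>y. {z, y} \<notin> g" "a \<noteq> z"
  shows "\<not> connected g a z" "\<not> connected g z a"
proof -
  have "link_closed g (- {z})"
    using assms(1) unfolding link_closed_def by (auto simp: insert_commute)
  then show "\<not> connected g a z" unfolding connected_def using walk_closed assms(2) by blast
  have "link_closed g {z}" using assms(1) unfolding link_closed_def by auto
  then show "\<not> connected g z a" unfolding connected_def using walk_closed assms(2) by blast
qed

lemma not_connected_empty: "a \<noteq> b \<Longrightarrow> \<not> connected {} a b"
  using not_connected_isolated(2)[of a "{}" b] by auto

lemma dist_link: "{i, j} \<in> g \<Longrightarrow> i \<noteq> j \<Longrightarrow> Defs.dist g i j = 1"
  unfolding Defs.dist_def by (rule Least_equality) (auto simp: walk_1_iff Suc_le_eq intro: gr0I dest: walk_0_iff[THEN iffD1])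

lemma dist_two: "{i, k} \<in> g \<Longrightarrow> {k, j} \<in> g \<Longrightarrow> {i, j} \<notin> g \<Longrightarrow> i \<noteq> j \<Longrightarrow> Defs.dist g i j = 2"
  unfolding Defs.dist_def by (rule Least_equality) (auto dest: walk_length_ge2 intro: walk_2)

lemma dist_ge2: "connected g i j \<Longrightarrow> i \<noteq> j \<Longrightarrow> {i, j} \<notin> g \<Longrightarrow> 2 \<le> Defs.dist g i j"
  unfolding Defs.dist_def connected_def by (metis LeastI walk_length_ge2)

lemma dist_antimono: "connected g i j \<Longrightarrow> g \<subseteq> g' \<Longrightarrow> Defs.dist g' i j \<le> Defs.dist g i j"
  unfolding Defs.dist_def connected_def by (metis Least_le LeastI walk_mono)


section \<open>Payoffs and the value of a single link\<close>

definition benefit :: "nat \<Rightarrow> real \<Rightarrow> (nat \<Rightarrow> real) \<Rightarrow> nat set set \<Rightarrow> nat \<Rightarrow> real" where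
  "benefit N \<delta> v g i =
     (\<Sum>j\<in>{j \<in> agents N. j \<noteq> i \<and> connected g i j}. \<delta> ^ (Defs.dist g i j - 1) * v j)"

definition link_count :: "nat \<Rightarrow> nat set set \<Rightarrow> nat \<Rightarrow> nat" where
  "link_count N g i = card {j \<in> agents N. {i, j} \<in> g}"

lemma payoff_split: "payoff N c \<delta> v g i = benefit N \<delta> v g i - c * real (link_count N g i)"
  unfolding payoff_def benefit_def link_count_def by simp

lemma link_count_insert:
  assumes "i \<noteq> p" "p \<in> agents N"
  shows "link_count N (insert {i, p} g) i = Suc (link_count N (g - {{i, p}}) i)"
proof -
  have links: "{j \<in> agents N. {i, j} \<in> insert {i, p} g} = insert p {j \<in> agents N. {i, j} \<in> g - {{i, p}}}"
    using assms by (auto simp: doubleton_eq_iff)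
  have "finite (agents N)" by (simp add: agents_def)
  then show ?thesis unfolding link_count_def links by (simp add: card_insert_disjoint)
qed

definition two_ball :: "nat \<Rightarrow> nat set set \<Rightarrow> nat \<Rightarrow> nat set \<Rightarrow> bool" where
  "two_ball N g i S \<longleftrightarrow> S \<subseteq> agents N \<and> i \<in> S \<and> link_closed g S
     \<and> (\<forall>j\<in>S. j \<noteq> i \<longrightarrow> {i, j} \<in> g \<or> (\<exists>k. {i, k} \<in> g \<and> {k, j} \<in> g))"

lemma two_ball_connected:
  assumes "two_ball N g i S"
  shows "{j \<in> agents N. j \<noteq> i \<and> connected g i j} = S - {i}"
proof
  show "{j \<in> agents N. j \<noteq> i \<and> connected g i j} \<subseteq> S - {i}"
    using assms unfolding two_ball_def connected_def by (auto dest: walk_closed)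
  show "S - {i} \<subseteq> {j \<in> agents N. j \<noteq> i \<and> connected g i j}"
    using assms unfolding two_ball_def by (auto intro: connected_link connected_two)
qed

lemma benefit_two_ball:
  assumes "two_ball N g i S"
  shows "benefit N \<delta> v g i = (\<Sum>j\<in>S - {i}. if {i, j} \<in> g then v j else \<delta> * v j)"
  unfolding benefit_def two_ball_connected[OF assms]
proof (rule sum.cong)
  fix j assume j: "j \<in> S - {i}"
  show "\<delta> ^ (Defs.dist g i j - 1) * v j = (if {i, j} \<in> g then v j else \<delta> * v j)"
  proof (cases "{i, j} \<in> g")
    case True
    then show ?thesis using j by (simp add: dist_link)
  next
    case False
    then obtain k where "{i, k} \<in> g" "{k, j} \<in> g" using j assms unfolding two_ball_def by auto
    then show ?thesis using False j by (simp add: dist_two)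
  qed
qed simp

lemma link_gain_two_ball:
  assumes ip: "i \<noteq> p" "p \<in> agents N"
    and ball_with: "two_ball N (insert {i, p} g) i S'" and ball_without: "two_ball N (g - {{i, p}}) i S"
    and balls: "(S' = S \<and> p \<in> S) \<or> (S' = insert p S \<and> p \<notin> S)"
  shows "payoff N c \<delta> v (insert {i, p} g) i - payoff N c \<delta> v (g - {{i, p}}) i
         = v p - (if p \<in> S then \<delta> * v p else 0) - c"
proof -
  define w' where "w' j = (if {i, j} \<in> insert {i, p} g then v j else \<delta> * v j)" for j
  define w where "w j = (if {i, j} \<in> g - {{i, p}} then v j else \<delta> * v j)" for j
  have fin: "finite S'" "finite S"
    using ball_with ball_without unfolding two_ball_def agents_def by (meson finite_atLeastAtMost finite_subset)+
  have pS': "p \<in> S' - {i}" using balls ip by auto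
  have sum_with: "(\<Sum>j\<in>S' - {i}. w' j) = v p + (\<Sum>j\<in>S' - {i} - {p}. w j)"
  proof -
    have "(\<Sum>j\<in>S' - {i} - {p}. w' j) = (\<Sum>j\<in>S' - {i} - {p}. w j)"
      using ip by (intro sum.cong) (auto simp: w'_def w_def doubleton_eq_iff)
    then show ?thesis using sum.remove[OF _ pS', of w'] fin by (simp add: w'_def)
  qed
  have sum_without: "(\<Sum>j\<in>S - {i}. w j) = (if p \<in> S then \<delta> * v p else 0) + (\<Sum>j\<in>S' - {i} - {p}. w j)"
  proof (cases "p \<in> S")
    case True
    then have "p \<in> S - {i}" using ip by auto
    then show ?thesis using sum.remove[of "S - {i}" p w] fin balls True by (simp add: w_def)
  next
    case False
    then have "S' - {i} - {p} = S - {i}" using balls by auto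
    then show ?thesis using False by simp
  qed
  define R where "R = (\<Sum>j\<in>S' - {i} - {p}. w j)"
  have "benefit N \<delta> v (insert {i, p} g) i = v p + R"
    using benefit_two_ball[OF ball_with, of \<delta> v] sum_with unfolding R_def w'_def by simp
  moreover have "benefit N \<delta> v (g - {{i, p}}) i = (if p \<in> S then \<delta> * v p else 0) + R"
    using benefit_two_ball[OF ball_without, of \<delta> v] sum_without unfolding R_def w_def by simp
  moreover have "c * real (link_count N (insert {i, p} g) i) = c * real (link_count N (g - {{i, p}}) i) + c"
    using link_count_insert[OF ip, of g] by (simp add: distrib_left)
  ultimately show ?thesis unfolding payoff_split by linarith
qed

lemma discounted_value_mono:
  fixes x \<delta> :: real
  assumes "connected g i j" "g \<subseteq> g'" "0 \<le> x" "0 < \<delta>" "\<delta> < 1"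
  shows "\<delta> ^ (Defs.dist g i j - 1) * x \<le> \<delta> ^ (Defs.dist g' i j - 1) * x"
proof -
  have "\<delta> ^ (Defs.dist g i j - 1) \<le> \<delta> ^ (Defs.dist g' i j - 1)"
    by (intro power_decreasing diff_le_mono) (use assms(4,5) dist_antimono[OF assms(1,2)] in auto)
  then show ?thesis using assms(3) by (rule mult_right_mono)
qed

text \<open>Lower bound on the marginal benefit of the link ip in an arbitrary network: the
  other agents only get closer, and p is worth at most delta * v p without the link when
  connected indirectly.\<close>
lemma benefit_link_lower:
  assumes ip: "i \<noteq> p" "p \<in> agents N"
    and v_nonneg: "\<forall>j\<in>agents N. v j \<ge> 0" and d: "0 < \<delta>" "\<delta> < 1"
  shows "benefit N \<delta> v (g - {{i, p}}) i + v p - (if connected (g - {{i, p}}) i p then \<delta> * v p else 0)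
         \<le> benefit N \<delta> v (insert {i, p} g) i"
proof -
  define g' where "g' = insert {i, p} g"
  define g0 where "g0 = g - {{i, p}}"
  define C' where "C' = {j \<in> agents N. j \<noteq> i \<and> connected g' i j}"
  define C where "C = {j \<in> agents N. j \<noteq> i \<and> connected g0 i j}"
  define F' where "F' j = \<delta> ^ (Defs.dist g' i j - 1) * v j" for j
  define F where "F j = \<delta> ^ (Defs.dist g0 i j - 1) * v j" for j
  have fin: "finite C'" "finite C" unfolding C'_def C_def agents_def by auto
  have sub: "g0 \<subseteq> g'" unfolding g0_def g'_def by auto
  have CC': "C \<subseteq> C'" unfolding C_def C'_def connected_def using sub by (auto intro: walk_mono)
  have pC': "p \<in> C'" unfolding C'_def g'_def using ip by (auto intro: connected_link)
  have F'p: "F' p = v p" unfolding F'_def g'_def using dist_link[OF _ ip(1)] by simp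
  have p_term: "(\<Sum>j\<in>C. F j) \<le> (if connected g0 i p then \<delta> * v p else 0) + (\<Sum>j\<in>C - {p}. F j)"
  proof (cases "p \<in> C")
    case True
    then have "2 \<le> Defs.dist g0 i p" using ip unfolding C_def g0_def by (intro dist_ge2) auto
    then have "\<delta> ^ (Defs.dist g0 i p - 1) \<le> \<delta> ^ 1" using d by (intro power_decreasing) auto
    then have "F p \<le> \<delta> * v p" using v_nonneg ip unfolding F_def by (simp add: mult_right_mono)
    moreover have "connected g0 i p" using True unfolding C_def by auto
    ultimately show ?thesis using sum.remove[OF fin(2) True, of F] by simp
  next
    case False
    then show ?thesis using v_nonneg ip d by simp
  qed
  also have "(\<Sum>j\<in>C - {p}. F j) \<le> (\<Sum>j\<in>C - {p}. F' j)"
    using v_nonneg d sub unfolding C_def F_def F'_def by (intro sum_mono discounted_value_mono) auto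
  also have "\<dots> \<le> (\<Sum>j\<in>C' - {p}. F' j)"
    using CC' fin v_nonneg d unfolding C'_def F'_def by (intro sum_mono2) auto
  also have "\<dots> = (\<Sum>j\<in>C'. F' j) - v p"
    using sum.remove[OF fin(1) pC', of F'] F'p by simp
  finally show ?thesis
    unfolding benefit_def C_def C'_def F_def F'_def g0_def g'_def by simp
qed


lemma step_fst:
  "fst (step N c \<delta> f \<kappa> Ef cmpl (g, K) (i, j)) =
     (if agrees N c \<delta> f \<kappa> Ef cmpl (g, K) i j \<and> agrees N c \<delta> f \<kappa> Ef cmpl (g, K) j i
      then insert {i, j} g else g - {{i, j}})"
  by (simp add: step_def Let_def)

lemma step_snd:
  "snd (step N c \<delta> f \<kappa> Ef cmpl (g, K) p) =
     K \<union> {(a, b). connected (fst (step N c \<delta> f \<kappa> Ef cmpl (g, K) p)) a b}"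
  by (simp add: step_def Let_def)

lemma foldl_invariant:
  "(\<And>x a. P x \<Longrightarrow> a \<in> S \<Longrightarrow> P (F x a)) \<Longrightarrow> P x \<Longrightarrow> set as \<subseteq> S \<Longrightarrow> P (foldl F x as)"
  by (induction as arbitrary: x) auto

lemma stable_by_invariant:
  assumes "P st" and preserved: "\<And>s p. P s \<Longrightarrow> p \<in> sel_pairs N \<Longrightarrow> P (step N c \<delta> f \<kappa> Ef cmpl s p)"
    and fixes_net: "\<And>s. P s \<Longrightarrow> fst s = fst st"
  shows "stable N c \<delta> f \<kappa> Ef cmpl st"
  unfolding stable_def
proof (intro allI impI)
  fix ps assume "set ps \<subseteq> sel_pairs N"
  then have "P (foldl (step N c \<delta> f \<kappa> Ef cmpl) st ps)"
    using foldl_invariant[where F = "step N c \<delta> f \<kappa> Ef cmpl" and P = P] preserved \<open>P st\<close> by blast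
  then show "fst (foldl (step N c \<delta> f \<kappa> Ef cmpl) st ps) = fst st" by (rule fixes_net)
qed

definition informed :: "bool \<Rightarrow> nat \<Rightarrow> (nat \<times> nat) set \<Rightarrow> bool" where
  "informed cmpl N K \<longleftrightarrow> cmpl \<or> (\<forall>a\<in>agents N. \<forall>b\<in>agents N. a \<noteq> b \<longrightarrow> (a, b) \<in> K)"

lemma informed_step:
  "informed cmpl N (snd st) \<Longrightarrow> informed cmpl N (snd (step N c \<delta> f \<kappa> Ef cmpl st p))"
  by (cases st) (auto simp: informed_def step_snd)

lemma informed_foldl:
  "informed cmpl N (snd st) \<Longrightarrow> informed cmpl N (snd (foldl (step N c \<delta> f \<kappa> Ef cmpl) st ps))"
  by (induction ps arbitrary: st) (simp, metis foldl_Cons informed_step)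

text \<open>Types have positive value and the prior expectation is nonnegative, so all valuations
  are nonnegative; this is what makes the lower bound on the value of a link applicable.\<close>
locale positive_values =
  fixes N :: nat and c \<delta> :: real and f :: "'x \<Rightarrow> real" and \<kappa> :: "nat \<Rightarrow> 'x" and Ef :: real
  assumes d0: "0 < \<delta>" and d1: "\<delta> < 1"
    and f_pos: "\<forall>j\<in>agents N. f (\<kappa> j) > 0" and Ef_nonneg: "Ef \<ge> 0"
begin

lemma valuation_informed:
  "informed cmpl N K \<Longrightarrow> i \<in> agents N \<Longrightarrow> j \<in> agents N \<Longrightarrow> i \<noteq> j
   \<Longrightarrow> valuation f \<kappa> Ef cmpl K i j = f (\<kappa> j)"
  unfolding valuation_def informed_def by auto

lemma valuation_nonneg: "j \<in> agents N \<Longrightarrow> valuation f \<kappa> Ef cmpl K i j \<ge> 0"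
  using f_pos Ef_nonneg unfolding valuation_def by (auto intro: less_imp_le)

lemma agrees_if_worth:
  assumes "i \<noteq> p" "p \<in> agents N"
    and "c \<le> valuation f \<kappa> Ef cmpl K i p
             - (if connected (g - {{i, p}}) i p then \<delta> * valuation f \<kappa> Ef cmpl K i p else 0)"
  shows "agrees N c \<delta> f \<kappa> Ef cmpl (g, K) i p"
proof -
  let ?v = "valuation f \<kappa> Ef cmpl K i"
  have "benefit N \<delta> ?v (g - {{i, p}}) i + ?v p - (if connected (g - {{i, p}}) i p then \<delta> * ?v p else 0)
      \<le> benefit N \<delta> ?v (insert {i, p} g) i"
    using valuation_nonneg d0 d1 by (intro benefit_link_lower[OF assms(1,2)]) auto
  moreover have "c * real (link_count N (insert {i, p} g) i) = c * real (link_count N (g - {{i, p}}) i) + c"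
    using link_count_insert[OF assms(1,2), of g] by (simp add: distrib_left)
  ultimately show ?thesis using assms(3) unfolding agrees_def payoff_split fst_conv snd_conv by linarith
qed

lemma refuses_if_not_worth:
  assumes "i \<noteq> p" "p \<in> agents N"
    and "two_ball N (insert {i, p} g) i S'" "two_ball N (g - {{i, p}}) i S"
    and "(S' = S \<and> p \<in> S) \<or> (S' = insert p S \<and> p \<notin> S)"
    and "valuation f \<kappa> Ef cmpl K i p - (if p \<in> S then \<delta> * valuation f \<kappa> Ef cmpl K i p else 0) < c"
  shows "\<not> agrees N c \<delta> f \<kappa> Ef cmpl (g, K) i p"
  using link_gain_two_ball[OF assms(1-5), of c \<delta> "valuation f \<kappa> Ef cmpl K i"] assms(6)
  unfolding agrees_def by auto

end


section \<open>The hub network and its stability\<close>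

definition star_net :: "nat \<Rightarrow> nat set \<Rightarrow> nat set set" where
  "star_net h T = (\<lambda>j. {h, j}) ` T"

definition clique_net :: "nat set \<Rightarrow> nat set set" where
  "clique_net S = {{a, b} | a b. a \<in> S \<and> b \<in> S \<and> a \<noteq> b}"

lemma star_net_mem: "{x, y} \<in> star_net h T \<longleftrightarrow> (x = h \<and> y \<in> T) \<or> (y = h \<and> x \<in> T)"
  unfolding star_net_def by (auto simp: doubleton_eq_iff)

lemma clique_net_mem: "{x, y} \<in> clique_net S \<longleftrightarrow> x \<in> S \<and> y \<in> S \<and> x \<noteq> y"
  unfolding clique_net_def by (auto simp: doubleton_eq_iff)

locale hub = positive_values +
  fixes h0 :: nat and A Hi :: "nat set"
  assumes h0: "h0 \<in> agents N" and h0_max: "\<forall>j\<in>agents N. f (\<kappa> j) \<le> f (\<kappa> h0)"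
    and A_def: "A = {j \<in> agents N. c \<le> f (\<kappa> j)}"
    and Hi_def: "Hi = {j \<in> agents N. c \<le> (1 - \<delta>) * f (\<kappa> j)}"
begin

lemma A_agents: "A \<subseteq> agents N"
  unfolding A_def by auto

lemma Hi_A: "Hi \<subseteq> A"
proof
  fix j assume "j \<in> Hi"
  then have j: "j \<in> agents N" "c \<le> (1 - \<delta>) * f (\<kappa> j)" unfolding Hi_def by auto
  have "0 \<le> \<delta> * f (\<kappa> j)" using f_pos j d0 by (auto intro!: mult_nonneg_nonneg less_imp_le)
  then have "(1 - \<delta>) * f (\<kappa> j) \<le> f (\<kappa> j)" by (simp add: algebra_simps)
  then show "j \<in> A" using j unfolding A_def by auto
qed

lemma h0_A: "A \<noteq> {} \<Longrightarrow> h0 \<in> A"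
  using h0_max h0 unfolding A_def by (auto intro: order_trans)

lemma h0_Hi: "Hi \<noteq> {} \<Longrightarrow> h0 \<in> Hi"
proof -
  assume "Hi \<noteq> {}"
  then obtain j where j: "j \<in> agents N" "c \<le> (1 - \<delta>) * f (\<kappa> j)" unfolding Hi_def by auto
  have "(1 - \<delta>) * f (\<kappa> j) \<le> (1 - \<delta>) * f (\<kappa> h0)" using h0_max j d1 by (intro mult_left_mono) auto
  then show "h0 \<in> Hi" using j h0 unfolding Hi_def by auto
qed

text \<open>When an informed hub meets agent j while the network is a star around h0, the link
  h0 j ends up present exactly when j is worth a direct link: j is linked to nobody else,
  and h0, having maximal value, is worth a link for j whenever j is for h0.\<close>
lemma hub_meeting:
  assumes info: "informed cmpl N K" and T: "T \<subseteq> agents N - {h0}" and j: "j \<in> agents N - {h0}"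
  shows "fst (step N c \<delta> f \<kappa> Ef cmpl (star_net h0 T, K) (h0, j))
         = star_net h0 (if j \<in> A then insert j T else T - {j})"
proof (cases "j \<in> A")
  case True
  have jh: "j \<noteq> h0" using j by auto
  have iso: "\<forall>y. {j, y} \<notin> star_net h0 T - {{h0, j}}" "\<forall>y. {j, y} \<notin> star_net h0 T - {{j, h0}}"
    using j by (auto simp: star_net_mem insert_commute)
  have "agrees N c \<delta> f \<kappa> Ef cmpl (star_net h0 T, K) h0 j"
    using True j h0 valuation_informed[OF info h0, of j] not_connected_isolated(1)[OF iso(1) jh[symmetric]]
    by (intro agrees_if_worth) (auto simp: A_def)
  moreover have "c \<le> f (\<kappa> h0)" using True h0_max unfolding A_def by (auto intro: order_trans)
  then have "agrees N c \<delta> f \<kappa> Ef cmpl (star_net h0 T, K) j h0"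
    using j h0 valuation_informed[OF info _ h0, of j] not_connected_isolated(2)[OF iso(2) jh[symmetric]]
    by (intro agrees_if_worth) auto
  moreover have "insert {h0, j} (star_net h0 T) = star_net h0 (insert j T)" unfolding star_net_def by auto
  ultimately show ?thesis using True by (simp add: step_fst)
next
  case False
  have jh: "h0 \<noteq> j" using j by auto
  have with_link: "insert {h0, j} (star_net h0 T) = star_net h0 (insert j T)"
    unfolding star_net_def by auto
  have without_link: "star_net h0 T - {{h0, j}} = star_net h0 (T - {j})"
    using jh unfolding star_net_def by (auto simp: doubleton_eq_iff)
  have star_ball: "two_ball N (star_net h0 U) h0 (insert h0 U)" if "U \<subseteq> agents N - {h0}" for U
    using that h0 unfolding two_ball_def link_closed_def star_net_def by auto
  have "\<not> agrees N c \<delta> f \<kappa> Ef cmpl (star_net h0 T, K) h0 j"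
  proof (rule refuses_if_not_worth[where S' = "insert h0 (insert j T)" and S = "insert h0 (T - {j})"])
    show "two_ball N (insert {h0, j} (star_net h0 T)) h0 (insert h0 (insert j T))"
      unfolding with_link using T j by (intro star_ball) auto
    show "two_ball N (star_net h0 T - {{h0, j}}) h0 (insert h0 (T - {j}))"
      unfolding without_link using T by (intro star_ball) auto
  qed (use jh j False valuation_informed[OF info h0, of j] in \<open>auto simp: A_def\<close>)
  then show ?thesis using False without_link by (simp add: step_fst)
qed

lemma agrees_Hi:
  assumes info: "informed cmpl N K" and "i \<noteq> p" "i \<in> agents N" and p: "p \<in> Hi"
  shows "agrees N c \<delta> f \<kappa> Ef cmpl (g, K) i p"
proof -
  have p': "p \<in> agents N" "c \<le> (1 - \<delta>) * f (\<kappa> p)" using p unfolding Hi_def by auto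
  have "(if connected (g - {{i, p}}) i p then \<delta> * f (\<kappa> p) else 0) \<le> \<delta> * f (\<kappa> p)"
    using d0 f_pos p' by (auto intro: less_imp_le)
  then show ?thesis
    using assms p' valuation_informed[OF info, of i p] by (intro agrees_if_worth) (auto simp: algebra_simps)
qed

lemma Hi_meeting:
  assumes "informed cmpl N K" and "a \<in> Hi" "b \<in> Hi" "a \<noteq> b"
  shows "fst (step N c \<delta> f \<kappa> Ef cmpl (g, K) (a, b)) = insert {a, b} g"
  using assms agrees_Hi[OF assms(1), of a b] agrees_Hi[OF assms(1), of b a] Hi_A A_agents
  by (auto simp: step_fst)

definition hub_net :: "nat set set" where
  "hub_net = star_net h0 (A - {h0}) \<union> clique_net Hi"

lemma hub_net_mem:
  "{x, y} \<in> hub_net \<longleftrightarrow> (x = h0 \<and> y \<in> A - {h0}) \<or> (y = h0 \<and> x \<in> A - {h0}) \<or> (x \<in> Hi \<and> y \<in> Hi \<and> x \<noteq> y)"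
  unfolding hub_net_def by (simp add: clique_net_mem star_net_mem)

lemma hub_net_within_A: "{u, w} \<in> hub_net \<Longrightarrow> u \<in> A \<and> w \<in> A"
  using Hi_A h0_A unfolding hub_net_mem by blast

lemma hub_net_closed: "A \<subseteq> S \<Longrightarrow> link_closed hub_net S"
  unfolding link_closed_def using hub_net_within_A by blast

text \<open>In networks containing the hub network, a member x of A reaches all of A within two
  steps through h0; a closed set S of agents directly linked to x otherwise is a two-ball.\<close>
lemma two_ball_A:
  assumes x: "x \<in> A" and closed: "link_closed g S"
    and S: "A \<subseteq> S" "S \<subseteq> agents N" and hub: "hub_net \<subseteq> g" and linked: "\<forall>j\<in>S - A. {x, j} \<in> g"
  shows "two_ball N g x S"
  unfolding two_ball_def
proof (intro conjI ballI impI)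
  fix j assume j: "j \<in> S" "j \<noteq> x"
  have spoke: "{h0, t} \<in> g" if "t \<in> A" "t \<noteq> h0" for t
    using hub that unfolding hub_net_def star_net_def by auto
  show "{x, j} \<in> g \<or> (\<exists>k. {x, k} \<in> g \<and> {k, j} \<in> g)"
  proof (cases "j \<in> A")
    case False
    then show ?thesis using linked j by auto
  next
    case True
    then show ?thesis
      using spoke[OF x] spoke[OF True] j by (cases "x = h0"; cases "j = h0") (auto simp: insert_commute)
  qed
qed (use x S closed in auto)

text \<open>Links of the hub network are kept: a link to Hi is always worth it, and the other
  links are spokes whose removal would isolate an agent of A.\<close>
lemma hub_link_kept:
  assumes info: "informed cmpl N K" and xy: "{x, y} \<in> hub_net" "x \<noteq> y" "x \<in> agents N"
  shows "agrees N c \<delta> f \<kappa> Ef cmpl (hub_net, K) x y"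
proof (cases "y \<in> Hi")
  case True
  then show ?thesis using agrees_Hi[OF info xy(2,3)] by simp
next
  case False
  have y: "y \<in> A" "y \<in> agents N" using hub_net_within_A[OF xy(1)] A_agents by auto
  have "\<not> connected (hub_net - {{x, y}}) x y"
  proof (cases "y = h0")
    case False
    then have "x = h0" using xy(1) \<open>y \<notin> Hi\<close> unfolding hub_net_mem by auto
    then have "w = x" if "{y, w} \<in> hub_net" for w
      using that False \<open>y \<notin> Hi\<close> unfolding hub_net_mem by auto
    then have "\<forall>w. {y, w} \<notin> hub_net - {{x, y}}" by (auto simp: insert_commute)
    then show ?thesis by (rule not_connected_isolated(1)) (use xy(2) in simp)
  next
    case True
    then have "Hi = {}" using h0_Hi \<open>y \<notin> Hi\<close> by auto
    then have "w = y" if "{x, w} \<in> hub_net" for w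
      using that True xy(2) unfolding hub_net_mem by auto
    then have "\<forall>w. {x, w} \<notin> hub_net - {{x, y}}" by auto
    then show ?thesis by (rule not_connected_isolated(2)) (use xy(2) in simp)
  qed
  moreover have "valuation f \<kappa> Ef cmpl K x y = f (\<kappa> y)"
    using valuation_informed[OF info xy(3) y(2) xy(2)] .
  moreover have "c \<le> f (\<kappa> y)" using y(1) unfolding A_def by auto
  ultimately show ?thesis using xy(2) y(2) by (intro agrees_if_worth) auto
qed

text \<open>Nobody accepts a link to an agent outside A: it adds only that agent's value.\<close>
lemma refuses_outside_A:
  assumes info: "informed cmpl N K" and xy: "x \<noteq> y" "x \<in> agents N" "y \<in> agents N" "y \<notin> A"
  shows "\<not> agrees N c \<delta> f \<kappa> Ef cmpl (hub_net, K) x y"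
proof -
  have no_link: "hub_net - {{x, y}} = hub_net" "{x, y} \<notin> hub_net"
    using xy hub_net_within_A by auto
  have v: "valuation f \<kappa> Ef cmpl K x y = f (\<kappa> y)" using valuation_informed[OF info xy(2,3,1)] .
  show ?thesis
  proof (cases "x \<in> A")
    case True
    show ?thesis
    proof (rule refuses_if_not_worth[where S' = "insert y A" and S = A])
      show "two_ball N (insert {x, y} hub_net) x (insert y A)"
        by (rule two_ball_A[OF True]) (use True A_agents xy in \<open>auto intro: link_closed_insert hub_net_closed\<close>)
      show "two_ball N (hub_net - {{x, y}}) x A" unfolding no_link
        by (rule two_ball_A[OF True]) (use A_agents in \<open>auto intro: hub_net_closed\<close>)
    qed (use xy v in \<open>auto simp: A_def\<close>)
  next
    case False
    show ?thesis
    proof (rule refuses_if_not_worth[where S' = "{x, y}" and S = "{x}"])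
      show "two_ball N (insert {x, y} hub_net) x {x, y}"
        unfolding two_ball_def link_closed_def using xy False hub_net_within_A by (auto simp: doubleton_eq_iff)
      show "two_ball N (hub_net - {{x, y}}) x {x}"
        unfolding two_ball_def link_closed_def no_link using xy False hub_net_within_A by auto
    qed (use xy v in \<open>auto simp: A_def\<close>)
  qed
qed

text \<open>Between two unlinked members of A, already at distance two through h0, a link to an
  agent outside Hi is not worth its cost.\<close>
lemma refuses_redundant:
  assumes info: "informed cmpl N K" and xy: "{x, y} \<notin> hub_net" "x \<noteq> y" "x \<in> A" "y \<in> A" "y \<notin> Hi"
  shows "\<not> agrees N c \<delta> f \<kappa> Ef cmpl (hub_net, K) x y"
proof (rule refuses_if_not_worth[where S' = A and S = A])
  have no_link: "hub_net - {{x, y}} = hub_net" using xy by auto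
  show "two_ball N (insert {x, y} hub_net) x A"
    by (rule two_ball_A[OF xy(3)]) (use A_agents xy in \<open>auto intro: link_closed_insert hub_net_closed\<close>)
  show "two_ball N (hub_net - {{x, y}}) x A" unfolding no_link
    by (rule two_ball_A[OF xy(3)]) (use A_agents in \<open>auto intro: hub_net_closed\<close>)
  have "valuation f \<kappa> Ef cmpl K x y = f (\<kappa> y)"
    using xy A_agents valuation_informed[OF info, of x y] by auto
  moreover have "\<not> c \<le> (1 - \<delta>) * f (\<kappa> y)" using xy A_agents unfolding Hi_def by auto
  ultimately show "valuation f \<kappa> Ef cmpl K x y - (if y \<in> A then \<delta> * valuation f \<kappa> Ef cmpl K x y else 0) < c"
    using xy by (simp add: algebra_simps)
qed (use xy A_agents in auto)

lemma hub_net_step: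
  assumes info: "informed cmpl N K" and ab: "(a, b) \<in> sel_pairs N"
  shows "fst (step N c \<delta> f \<kappa> Ef cmpl (hub_net, K) (a, b)) = hub_net"
proof -
  have ab': "a \<in> agents N" "b \<in> agents N" "a \<noteq> b" using ab unfolding sel_pairs_def by auto
  show ?thesis
  proof (cases "{a, b} \<in> hub_net")
    case True
    then have "{b, a} \<in> hub_net" by (simp add: insert_commute)
    then show ?thesis
      using True hub_link_kept[OF info True ab'(3,1)] hub_link_kept[OF info _ ab'(3)[symmetric] ab'(2)]
      by (simp add: step_fst insert_absorb)
  next
    case False
    then have F': "{b, a} \<notin> hub_net" by (simp add: insert_commute)
    have "\<not> agrees N c \<delta> f \<kappa> Ef cmpl (hub_net, K) a b \<or> \<not> agrees N c \<delta> f \<kappa> Ef cmpl (hub_net, K) b a"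
    proof (cases "a \<in> A \<and> b \<in> A")
      case True
      then have "a \<notin> Hi \<or> b \<notin> Hi" using False ab'(3) unfolding hub_net_mem by auto
      then show ?thesis using refuses_redundant[OF info False ab'(3)] refuses_redundant[OF info F' ab'(3)[symmetric]] True
        by blast
    next
      case False
      then show ?thesis using refuses_outside_A[OF info] ab' by metis
    qed
    then show ?thesis using False by (auto simp: step_fst)
  qed
qed

lemma hub_net_stable:
  assumes "informed cmpl N K"
  shows "stable N c \<delta> f \<kappa> Ef cmpl (hub_net, K)"
proof (rule stable_by_invariant[where P = "\<lambda>s. fst s = hub_net \<and> informed cmpl N (snd s)"])
  fix s p assume s: "fst s = hub_net \<and> informed cmpl N (snd s)" and p: "p \<in> sel_pairs N"
  obtain K' where s_eq: "s = (hub_net, K')" using s by (cases s) auto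
  obtain a b where p_eq: "p = (a, b)" by (cases p)
  have "informed cmpl N K'" using s s_eq by simp
  then have "fst (step N c \<delta> f \<kappa> Ef cmpl s p) = hub_net"
    unfolding s_eq p_eq using p p_eq by (intro hub_net_step) auto
  moreover have "informed cmpl N (snd (step N c \<delta> f \<kappa> Ef cmpl s p))"
    using s by (intro informed_step) simp
  ultimately show "fst (step N c \<delta> f \<kappa> Ef cmpl s p) = hub_net \<and> informed cmpl N (snd (step N c \<delta> f \<kappa> Ef cmpl s p))"
    by simp
qed (use assms in auto)

end


definition hub_meetings :: "nat \<Rightarrow> nat \<Rightarrow> (nat \<times> nat) list" where
  "hub_meetings N h = map (Pair h) (sorted_list_of_set (agents N - {h}))"

definition pair_meetings :: "nat set \<Rightarrow> (nat \<times> nat) list" where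
  "pair_meetings S = [(a, b). a \<leftarrow> sorted_list_of_set S, b \<leftarrow> sorted_list_of_set S, a \<noteq> b]"

definition hub_schedule :: "nat \<Rightarrow> nat \<Rightarrow> nat set \<Rightarrow> (nat \<times> nat) list" where
  "hub_schedule N h S = hub_meetings N h @ hub_meetings N h @ pair_meetings S"

definition schedule_path :: "(nat \<times> nat) list \<Rightarrow> nat \<times> nat \<Rightarrow> nat \<Rightarrow> nat \<times> nat" where
  "schedule_path L p t = (if t < length L then L ! t else p)"

lemma set_pair_meetings: "finite S \<Longrightarrow> set (pair_meetings S) = {(a, b). a \<in> S \<and> b \<in> S \<and> a \<noteq> b}"
  by (auto simp: pair_meetings_def)

lemma sorted_agents_except:
  "set (sorted_list_of_set (agents N - {h})) = agents N - {h}" "distinct (sorted_list_of_set (agents N - {h}))"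
  by (simp_all add: agents_def)

lemma hub_schedule_sel_pairs:
  "h \<in> agents N \<Longrightarrow> S \<subseteq> agents N \<Longrightarrow> set (hub_schedule N h S) \<subseteq> sel_pairs N"
  using finite_subset[of S "agents N"]
  by (auto simp: hub_schedule_def hub_meetings_def set_pair_meetings sel_pairs_def agents_def)

lemma run_schedule_path:
  "t \<le> length L \<Longrightarrow> run N c \<delta> f \<kappa> Ef cmpl (schedule_path L p) t
     = foldl (step N c \<delta> f \<kappa> Ef cmpl) ({}, {}) (take t L)"
  by (induction t) (auto simp: schedule_path_def take_Suc_conv_app_nth)

section \<open>Convergence along the path\<close>

context hub
begin

lemma hub_meetings_foldl:
  assumes "informed cmpl N (snd st)" "fst st = star_net h0 T" "T \<subseteq> agents N - {h0}"
    and "set xs \<subseteq> agents N - {h0}"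
  shows "fst (foldl (step N c \<delta> f \<kappa> Ef cmpl) st (map (Pair h0) xs)) = star_net h0 (T - set xs \<union> A \<inter> set xs)"
  using assms
proof (induction xs arbitrary: st T)
  case Nil
  then show ?case by simp
next
  case (Cons x xs)
  obtain g K where st: "st = (g, K)" by (cases st)
  define T' where "T' = (if x \<in> A then insert x T else T - {x})"
  have "fst (step N c \<delta> f \<kappa> Ef cmpl st (h0, x)) = star_net h0 T'"
    using hub_meeting[of cmpl K T x] Cons.prems unfolding st T'_def by simp
  moreover have "informed cmpl N (snd (step N c \<delta> f \<kappa> Ef cmpl st (h0, x)))"
    using Cons.prems(1) by (rule informed_step)
  moreover have "T' \<subseteq> agents N - {h0}" using Cons.prems unfolding T'_def by auto
  moreover have "T' - set xs \<union> A \<inter> set xs = T - set (x # xs) \<union> A \<inter> set (x # xs)"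
    unfolding T'_def by auto
  ultimately show ?case using Cons.IH[of _ T'] Cons.prems(4) by simp
qed

lemma Hi_meetings_foldl:
  assumes "informed cmpl N (snd st)" "set ps \<subseteq> {(a, b). a \<in> Hi \<and> b \<in> Hi \<and> a \<noteq> b}"
  shows "fst (foldl (step N c \<delta> f \<kappa> Ef cmpl) st ps) = fst st \<union> (\<lambda>(a, b). {a, b}) ` set ps"
  using assms
proof (induction ps arbitrary: st)
  case Nil
  then show ?case by simp
next
  case (Cons p ps)
  obtain g K where st: "st = (g, K)" by (cases st)
  obtain a b where p: "p = (a, b)" by (cases p)
  have "fst (step N c \<delta> f \<kappa> Ef cmpl st p) = insert {a, b} (fst st)"
    using Hi_meeting[of cmpl K a b g] Cons.prems p unfolding st by simp
  moreover have "informed cmpl N (snd (step N c \<delta> f \<kappa> Ef cmpl st p))"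
    using Cons.prems(1) by (rule informed_step)
  ultimately show ?case using Cons.IH Cons.prems(2) p by auto
qed

lemma last_phases_stable:
  assumes info: "informed cmpl N (snd st)" and star: "fst st = star_net h0 T" "T \<subseteq> agents N - {h0}"
  shows "stable N c \<delta> f \<kappa> Ef cmpl (foldl (step N c \<delta> f \<kappa> Ef cmpl) st (hub_meetings N h0 @ pair_meetings Hi))"
proof -
  define st1 where "st1 = foldl (step N c \<delta> f \<kappa> Ef cmpl) st (hub_meetings N h0)"
  define st2 where "st2 = foldl (step N c \<delta> f \<kappa> Ef cmpl) st1 (pair_meetings Hi)"
  have fin: "finite (agents N)" by (simp add: agents_def)
  then have fin_Hi: "finite Hi" using Hi_A A_agents by (meson finite_subset)
  have "fst st1 = star_net h0 (T - (agents N - {h0}) \<union> A \<inter> (agents N - {h0}))"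
    unfolding st1_def hub_meetings_def using hub_meetings_foldl[OF info star] fin by simp
  also have "T - (agents N - {h0}) \<union> A \<inter> (agents N - {h0}) = A - {h0}" using star(2) A_agents by auto
  finally have "fst st1 = star_net h0 (A - {h0})" .
  moreover have info1: "informed cmpl N (snd st1)" unfolding st1_def using info by (rule informed_foldl)
  moreover have "(\<lambda>(a, b). {a, b}) ` {(a, b). a \<in> Hi \<and> b \<in> Hi \<and> a \<noteq> b} = clique_net Hi"
    unfolding clique_net_def by auto
  ultimately have "fst st2 = hub_net"
    unfolding st2_def hub_net_def using Hi_meetings_foldl[OF info1] set_pair_meetings[OF fin_Hi] by simp
  moreover have "informed cmpl N (snd st2)" unfolding st2_def using info1 by (rule informed_foldl)
  ultimately have "stable N c \<delta> f \<kappa> Ef cmpl st2" using hub_net_stable by (metis prod.collapse)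
  then show ?thesis unfolding st2_def st1_def by simp
qed

lemma complete_info_stable:
  "stable N c \<delta> f \<kappa> Ef True (foldl (step N c \<delta> f \<kappa> Ef True) ({}, {}) (hub_schedule N h0 Hi))"
proof -
  define st1 where "st1 = foldl (step N c \<delta> f \<kappa> Ef True) ({}, {}) (hub_meetings N h0)"
  let ?js = "sorted_list_of_set (agents N - {h0})"
  have "fst st1 = star_net h0 ({} - set ?js \<union> A \<inter> set ?js)"
    unfolding st1_def hub_meetings_def
    by (rule hub_meetings_foldl) (auto simp: informed_def star_net_def sorted_agents_except)
  moreover have "{} - set ?js \<union> A \<inter> set ?js = A - {h0}"
    using A_agents by (auto simp: sorted_agents_except)
  moreover have "informed True N (snd st1)" by (simp add: informed_def)
  ultimately have "stable N c \<delta> f \<kappa> Ef True (foldl (step N c \<delta> f \<kappa> Ef True) st1 (hub_meetings N h0 @ pair_meetings Hi))"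
    by (intro last_phases_stable) (use A_agents in auto)
  then show ?thesis unfolding st1_def hub_schedule_def by simp
qed

text \<open>Incomplete information with E[f] >= c: during the first round the network is the star on
  the agents D met so far, types are known only within it, and connected agents know each other.\<close>
definition growing_star :: "nat set \<Rightarrow> nat set set \<times> (nat \<times> nat) set \<Rightarrow> bool" where
  "growing_star D st \<longleftrightarrow> fst st = star_net h0 D \<and> D \<subseteq> agents N - {h0}
     \<and> (\<forall>a b. (a, b) \<in> snd st \<longrightarrow> a = b \<or> (a \<in> insert h0 D \<and> b \<in> insert h0 D))
     \<and> (\<forall>a b. a \<noteq> b \<longrightarrow> connected (fst st) a b \<longrightarrow> (a, b) \<in> snd st)"

lemma connected_star: "connected (star_net h0 D) a b \<Longrightarrow> a = b \<or> (a \<in> insert h0 D \<and> b \<in> insert h0 D)"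
proof (cases "a \<in> insert h0 D")
  case True
  assume "connected (star_net h0 D) a b"
  moreover have "link_closed (star_net h0 D) (insert h0 D)" unfolding link_closed_def by (auto simp: star_net_mem)
  ultimately show ?thesis using True walk_closed unfolding connected_def by blast
next
  case False
  assume "connected (star_net h0 D) a b"
  moreover have "link_closed (star_net h0 D) {a}" using False unfolding link_closed_def by (auto simp: star_net_mem)
  ultimately show ?thesis using walk_closed unfolding connected_def by blast
qed

text \<open>A newly met agent j and the hub do not know each other's types, value each other at
  E[f] >= c, and are not yet connected, so they link.\<close>
lemma growing_star_step:
  assumes grow: "growing_star D st" and Ef_c: "c \<le> Ef" and j: "j \<in> agents N - insert h0 D"
  shows "growing_star (insert j D) (step N c \<delta> f \<kappa> Ef False st (h0, j))"
proof -
  obtain g K where st: "st = (g, K)" by (cases st)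
  have g: "g = star_net h0 D" and D: "D \<subseteq> agents N - {h0}"
    and K: "\<forall>a b. (a, b) \<in> K \<longrightarrow> a = b \<or> (a \<in> insert h0 D \<and> b \<in> insert h0 D)"
    using grow unfolding growing_star_def st by auto
  have jh: "j \<noteq> h0" "h0 \<noteq> j" using j by auto
  have unknown: "(h0, j) \<notin> K" "(j, h0) \<notin> K" using K j by auto
  have iso: "\<forall>y. {j, y} \<notin> g - {{h0, j}}" "\<forall>y. {j, y} \<notin> g - {{j, h0}}"
    using j unfolding g by (auto simp: star_net_mem)
  have "agrees N c \<delta> f \<kappa> Ef False (g, K) h0 j"
    using j jh not_connected_isolated(1)[OF iso(1) jh(2)] unknown Ef_c
    by (intro agrees_if_worth) (auto simp: valuation_def)
  moreover have "agrees N c \<delta> f \<kappa> Ef False (g, K) j h0"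
    using j h0 jh not_connected_isolated(2)[OF iso(2) jh(2)] unknown Ef_c
    by (intro agrees_if_worth) (auto simp: valuation_def)
  moreover have "insert {h0, j} g = star_net h0 (insert j D)" unfolding g star_net_def by auto
  ultimately have net: "fst (step N c \<delta> f \<kappa> Ef False st (h0, j)) = star_net h0 (insert j D)"
    unfolding st by (simp add: step_fst)
  then have "snd (step N c \<delta> f \<kappa> Ef False st (h0, j)) = K \<union> {(a, b). connected (star_net h0 (insert j D)) a b}"
    using step_snd[of N c \<delta> f \<kappa> Ef False g K "(h0, j)"] unfolding st by simp
  then show ?thesis unfolding growing_star_def net using K D j connected_star[of "insert j D"] by auto
qed

lemma growing_star_foldl:
  assumes "growing_star D st" "c \<le> Ef" "distinct xs" "set xs \<subseteq> agents N - insert h0 D"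
  shows "growing_star (D \<union> set xs) (foldl (step N c \<delta> f \<kappa> Ef False) st (map (Pair h0) xs))"
  using assms
proof (induction xs arbitrary: st D)
  case Nil
  then show ?case by simp
next
  case (Cons x xs)
  have "growing_star (insert x D) (step N c \<delta> f \<kappa> Ef False st (h0, x))"
    using growing_star_step[OF Cons.prems(1,2)] Cons.prems(4) by auto
  then have "growing_star (insert x D \<union> set xs)
      (foldl (step N c \<delta> f \<kappa> Ef False) (step N c \<delta> f \<kappa> Ef False st (h0, x)) (map (Pair h0) xs))"
    by (rule Cons.IH) (use Cons.prems(2-4) in auto)
  then show ?case by simp
qed

lemma full_star_informed:
  assumes "growing_star (agents N - {h0}) st"
  shows "informed False N (snd st)"
  unfolding informed_def
proof (intro disjI2 ballI impI)
  fix a b assume ab: "a \<in> agents N" "b \<in> agents N" "a \<noteq> b"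
  have g: "fst st = star_net h0 (agents N - {h0})" using assms unfolding growing_star_def by auto
  have spoke: "{h0, x} \<in> fst st" "{x, h0} \<in> fst st" if "x \<noteq> h0" "x \<in> agents N" for x
    using that unfolding g by (auto simp: star_net_mem)
  have "connected (fst st) a b"
  proof (cases "a = h0 \<or> b = h0")
    case True
    then show ?thesis using ab spoke by (auto intro: connected_link)
  next
    case False
    then show ?thesis using ab spoke by (auto intro: connected_two)
  qed
  then show "(a, b) \<in> snd st" using assms ab unfolding growing_star_def by auto
qed

lemma incomplete_info_stable:
  assumes Ef_c: "c \<le> Ef"
  shows "stable N c \<delta> f \<kappa> Ef False (foldl (step N c \<delta> f \<kappa> Ef False) ({}, {}) (hub_schedule N h0 Hi))"
proof -
  define st1 where "st1 = foldl (step N c \<delta> f \<kappa> Ef False) ({}, {}) (hub_meetings N h0)"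
  have "growing_star {} ({}, {})"
    unfolding growing_star_def using not_connected_empty by (auto simp: star_net_def)
  then have "growing_star ({} \<union> set (sorted_list_of_set (agents N - {h0}))) st1"
    unfolding st1_def hub_meetings_def
    by (rule growing_star_foldl[OF _ Ef_c]) (simp_all add: sorted_agents_except)
  then have grown: "growing_star (agents N - {h0}) st1" by (simp add: sorted_agents_except)
  then have "fst st1 = star_net h0 (agents N - {h0})" unfolding growing_star_def by simp
  moreover have "informed False N (snd st1)" using grown by (rule full_star_informed)
  ultimately have "stable N c \<delta> f \<kappa> Ef False (foldl (step N c \<delta> f \<kappa> Ef False) st1 (hub_meetings N h0 @ pair_meetings Hi))"
    by (intro last_phases_stable) auto
  then show ?thesis unfolding st1_def hub_schedule_def by simp
qed

end

text \<open>Incomplete information with E[f] < c: unknown agents are not worth a link, and since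
  nobody has ever been connected, nobody ever agrees to link.\<close>
lemma (in positive_values) empty_stable:
  assumes "Ef < c"
  shows "stable N c \<delta> f \<kappa> Ef False ({}, {})"
proof (rule stable_by_invariant[where P = "\<lambda>s :: nat set set \<times> (nat \<times> nat) set. fst s = {} \<and> (\<forall>a b. (a, b) \<in> snd s \<longrightarrow> a = b)"])
  fix s :: "nat set set \<times> (nat \<times> nat) set" and p
  assume s: "fst s = {} \<and> (\<forall>a b. (a, b) \<in> snd s \<longrightarrow> a = b)" and p: "p \<in> sel_pairs N"
  obtain K where s_eq: "s = ({}, K)" using s by (cases s) auto
  obtain i j where p_eq: "p = (i, j)" by (cases p)
  have ij: "i \<in> agents N" "j \<in> agents N" "i \<noteq> j" using p unfolding p_eq sel_pairs_def by auto
  have "\<not> agrees N c \<delta> f \<kappa> Ef False ({}, K) i j"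
  proof (rule refuses_if_not_worth[where S' = "{i, j}" and S = "{i}"])
    show "two_ball N (insert {i, j} {}) i {i, j}"
      unfolding two_ball_def link_closed_def using ij by (auto simp: doubleton_eq_iff)
    show "two_ball N ({} - {{i, j}}) i {i}" unfolding two_ball_def link_closed_def using ij by auto
  qed (use ij s s_eq assms in \<open>auto simp: valuation_def\<close>)
  then have net: "fst (step N c \<delta> f \<kappa> Ef False s p) = {}" unfolding s_eq p_eq by (simp add: step_fst)
  then have "snd (step N c \<delta> f \<kappa> Ef False s p) = K \<union> {(a, b). connected {} a b}"
    using step_snd[of N c \<delta> f \<kappa> Ef False "{}" K p] unfolding s_eq by simp
  moreover have "a = b" if "connected {} a b" for a b using that not_connected_empty by blast
  ultimately show "fst (step N c \<delta> f \<kappa> Ef False s p) = {} \<and> (\<forall>a b. (a, b) \<in> snd (step N c \<delta> f \<kappa> Ef False s p) \<longrightarrow> a = b)"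
    using net s s_eq by auto
qed auto

lemma (in hub) converges_schedule_path:
  "converges N c \<delta> f \<kappa> Ef cmpl (schedule_path (hub_schedule N h0 Hi) p)"
proof -
  let ?L = "hub_schedule N h0 Hi"
  have run_end: "run N c \<delta> f \<kappa> Ef b (schedule_path ?L p) (length ?L) = foldl (step N c \<delta> f \<kappa> Ef b) ({}, {}) ?L" for b
    by (simp add: run_schedule_path)
  show ?thesis
  proof (cases "cmpl \<or> c \<le> Ef")
    case True
    then show ?thesis
      using complete_info_stable incomplete_info_stable run_end unfolding converges_def by metis
  next
    case False
    then have "stable N c \<delta> f \<kappa> Ef cmpl (run N c \<delta> f \<kappa> Ef cmpl (schedule_path ?L p) 0)"
      using empty_stable by simp
    then show ?thesis unfolding converges_def by blast
  qed
qed


lemma finite_has_maximizer: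
  fixes v :: "'a \<Rightarrow> 'b :: linorder"
  assumes "finite S" "S \<noteq> {}"
  shows "\<exists>h\<in>S. \<forall>j\<in>S. v j \<le> v h"
proof -
  have "Max (v ` S) \<in> v ` S" using assms by simp
  then obtain h where "h \<in> S" "v h = Max (v ` S)" by (metis imageE)
  moreover have "v j \<le> Max (v ` S)" if "j \<in> S" for j using assms that by simp
  ultimately show ?thesis by metis
qed

theorem lemma2:
  fixes N :: nat and c \<delta> :: real and H :: "'x measure" and f :: "'x \<Rightarrow> real"
    and \<kappa> :: "nat \<Rightarrow> 'x"
  assumes "N \<ge> 2" and "c > 0" and "0 < \<delta>" and "\<delta> < 1"
    and "prob_space H" and "integrable H f" and "\<forall>x\<in>space H. f x > 0"
    and "\<forall>i\<in>agents N. \<kappa> i \<in> space H"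
  shows "\<exists>\<gamma>. (\<forall>t. \<gamma> t \<in> sel_pairs N)
            \<and> converges N c \<delta> f \<kappa> (integral\<^sup>L H f) True \<gamma>
            \<and> converges N c \<delta> f \<kappa> (integral\<^sup>L H f) False \<gamma>"
proof -
  have "0 \<le> integral\<^sup>L H f"
    by (rule integral_nonneg_AE) (use assms(7) in \<open>auto intro!: AE_I2 less_imp_le\<close>)
  then interpret positive_values N c \<delta> f \<kappa> "integral\<^sup>L H f"
    using assms(3,4,7,8) by unfold_locales auto
  obtain h0 where h0: "h0 \<in> agents N" and h0_max: "\<forall>j\<in>agents N. f (\<kappa> j) \<le> f (\<kappa> h0)"
    using finite_has_maximizer[of "agents N" "\<lambda>j. f (\<kappa> j)"] assms(1) by (auto simp: agents_def)
  define A where "A = {j \<in> agents N. c \<le> f (\<kappa> j)}"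
  define Hi where "Hi = {j \<in> agents N. c \<le> (1 - \<delta>) * f (\<kappa> j)}"
  interpret hub N c \<delta> f \<kappa> "integral\<^sup>L H f" h0 A Hi
    using h0 h0_max A_def Hi_def by unfold_locales auto
  define \<gamma> where "\<gamma> = schedule_path (hub_schedule N h0 Hi) (1, 2)"
  have "(1, 2) \<in> sel_pairs N" using assms(1) by (simp add: sel_pairs_def agents_def)
  then have "\<forall>t. \<gamma> t \<in> sel_pairs N"
    using hub_schedule_sel_pairs[OF h0, of Hi] Hi_A A_agents
    unfolding \<gamma>_def schedule_path_def by (auto dest: nth_mem)
  then show ?thesis using converges_schedule_path unfolding \<gamma>_def by blast
qed

end
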